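(* Let $P$ be an atomized poset such that no two atoms of $P$ generate $P$. Suppose there is an atom $a_0$ with the following property: for any atoms $a_1,a_2$ of $P$ there exists an atom $a_3$ such that each of the sets $\{a_1,a_2,a_3\}$, $\{a_0,a_1,a_3\}$, $\{a_0,a_2,a_3\}$ has an upper bound in $P$. Then $|P|$ is simply connected.
   Context: For a poset $P$, $|P|$ denotes the geometric realization of the order complex of $P$ (simplices = finite nonempty chains). A poset $P$ is atomized if every element of $P$ lies above some minimal element and every finite set of minimal elements that has an upper bound in $P$ has a join in $P$. Minimal elements are atoms; a finite set of atoms generates $P$ if it has no upper bound in $P$. *)

theory Defs
  imports "HOL-Analysis.Analysis"
begin

text \<open>The poset is a type of class order (the poset P is UNIV).\<close>

definition is_atom :: "'a::order \<Rightarrow> bool" where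
  "is_atom x \<longleftrightarrow> (\<forall>y. y \<le> x \<longrightarrow> y = x)"

definition has_upper_bound :: "'a::order set \<Rightarrow> bool" where
  "has_upper_bound S \<longleftrightarrow> (\<exists>u. \<forall>s\<in>S. s \<le> u)"

definition is_join :: "'a::order set \<Rightarrow> 'a \<Rightarrow> bool" where
  "is_join S j \<longleftrightarrow> (\<forall>s\<in>S. s \<le> j) \<and> (\<forall>u. (\<forall>s\<in>S. s \<le> u) \<longrightarrow> j \<le> u)"

definition atomized :: "'a::order itself \<Rightarrow> bool" where
  "atomized _ \<longleftrightarrow>
     (\<forall>x::'a. \<exists>a. is_atom a \<and> a \<le> x) \<and>
     (\<forall>S::'a set. finite S \<and> S \<noteq> {} \<and> (\<forall>a\<in>S. is_atom a) \<and> has_upper_bound S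
        \<longrightarrow> (\<exists>j. is_join S j))"

definition generates :: "'a::order set \<Rightarrow> bool" where
  "generates S \<longleftrightarrow> finite S \<and> (\<forall>a\<in>S. is_atom a) \<and> \<not> has_upper_bound S"

definition is_chain :: "'a::order set \<Rightarrow> bool" where
  "is_chain C \<longleftrightarrow> (\<forall>x\<in>C. \<forall>y\<in>C. x \<le> y \<or> y \<le> x)"

text \<open>Closed geometric simplex spanned by a finite set C of vertices, as
  barycentric coordinate functions (product topology on 'a \<Rightarrow> real).\<close>
definition geom_simplex :: "'a set \<Rightarrow> ('a \<Rightarrow> real) set" where
  "geom_simplex C = {f. (\<forall>x. 0 \<le> f x) \<and> (\<forall>x. x \<notin> C \<longrightarrow> f x = 0) \<and> sum f C = 1}"

definition order_simplices :: "'a::order set set" where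
  "order_simplices = {C. finite C \<and> C \<noteq> {} \<and> is_chain C}"

definition realization_carrier :: "('a::order \<Rightarrow> real) set" where
  "realization_carrier = (\<Union>C\<in>(order_simplices::'a set set). geom_simplex C)"

text \<open>Weak (coherent) topology: a set is open iff its trace on every closed simplex is open.\<close>
definition realization_open :: "('a::order \<Rightarrow> real) set \<Rightarrow> bool" where
  "realization_open U \<longleftrightarrow> U \<subseteq> realization_carrier \<and>
     (\<forall>C\<in>(order_simplices::'a set set). openin (top_of_set (geom_simplex C)) (U \<inter> geom_simplex C))"

lemma istopology_realization_open: "istopology (realization_open :: ('a::order \<Rightarrow> real) set \<Rightarrow> bool)"
  unfolding istopology_def
proof (intro conjI allI impI)
  fix S T :: "('a \<Rightarrow> real) set"
  assume "realization_open S" "realization_open T"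
  then show "realization_open (S \<inter> T)"
  proof -
    have "openin (top_of_set (geom_simplex C)) ((S \<inter> T) \<inter> geom_simplex C)"
      if "C \<in> order_simplices" for C
    proof -
      have "(S \<inter> T) \<inter> geom_simplex C = (S \<inter> geom_simplex C) \<inter> (T \<inter> geom_simplex C)" by blast
      then show ?thesis
        using that \<open>realization_open S\<close> \<open>realization_open T\<close>
        by (simp add: realization_open_def openin_Int)
    qed
    then show ?thesis using \<open>realization_open S\<close> by (auto simp: realization_open_def)
  qed
next
  fix K :: "('a \<Rightarrow> real) set set"
  assume K: "\<forall>k\<in>K. realization_open k"
  have "\<Union>K \<subseteq> realization_carrier" using K by (auto simp: realization_open_def)
  moreover have "openin (top_of_set (geom_simplex C)) (\<Union>K \<inter> geom_simplex C)"
    if "C \<in> order_simplices" for C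
  proof -
    have "\<Union>K \<inter> geom_simplex C = \<Union>((\<lambda>k. k \<inter> geom_simplex C) ` K)" by auto
    moreover have "\<forall>k\<in>K. openin (top_of_set (geom_simplex C)) (k \<inter> geom_simplex C)"
      using K that by (auto simp: realization_open_def)
    ultimately show ?thesis by (metis (no_types, lifting) openin_Union image_iff)
  qed
  ultimately show "realization_open (\<Union>K)" by (simp add: realization_open_def)
qed

definition order_complex_realization :: "'a::order itself \<Rightarrow> ('a \<Rightarrow> real) topology" where
  "order_complex_realization _ = topology (realization_open :: ('a \<Rightarrow> real) set \<Rightarrow> bool)"

text \<open>Mirrors the library's simply_connected for sets: any two loops are homotopic as loops.
  (For nonempty spaces this is path-connected with trivial fundamental group.)\<close>
definition simply_connected_space :: "'a topology \<Rightarrow> bool" where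
  "simply_connected_space X \<longleftrightarrow>
     (\<forall>p q. pathin X p \<and> p 1 = p 0 \<and> pathin X q \<and> q 1 = q 0 \<longrightarrow>
        homotopic_with (\<lambda>r. r 1 = r 0) (top_of_set {0..1}) X p q)"

end

theory Submission
  imports Defs
begin

text \<open>A loop in |P| has compact image, which meets only finitely many open stars of
  vertices; so it lies in the full subcomplex spanned by a finite set F, where homotopies are also
  continuous for the weak topology. Every point f of that subcomplex is tethered to the base vertex
  a0: along the edges a0, a0 \<squnion> a, a, w for a vertex w of the carrier simplex of f and an atom a
  below w, then straight to f. Cutting the loop into pieces that each stay in the open star of one
  vertex, it suffices that the tether to the start of a piece followed by the piece is homotopic to
  the tether to its end. This comes down to comparable vertices u, v, where the walks a0 ... u, v
  and a0 ... v must be homotopic. With a, b atoms below u, v and c an atom as in the hypothesis,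
  the sets {a, b, c}, {a0, a, c}, {a0, b, c} have joins, and the difference of the two walks
  decomposes into cones over these joins and over the larger of u and v.\<close>

section \<open>Paths in topological spaces\<close>

text \<open>The library's subpath and its path-group lemmas need a real normed vector space,
  which the realization (functions with the product topology) is not; constant paths
  take the place of degenerate line paths.\<close>

definition tsubpath :: "real \<Rightarrow> real \<Rightarrow> (real \<Rightarrow> 'a) \<Rightarrow> real \<Rightarrow> 'a"
  where "tsubpath u v g = (\<lambda>x. g ((v - u) * x + u))"

lemma affine_param_in_unit_interval:
  fixes u w x :: real
  assumes "u \<in> {0..1}" "w \<in> {0..1}" "x \<in> {0..1}"
  shows "(w - u) * x + u \<in> {0..1}"
proof -
  have "(w - u) * x + u = (1 - x) * u + x * w" by (simp add: algebra_simps)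
  moreover have "(1 - x) * u \<le> 1 - x" "x * w \<le> x"
    using assms by (auto intro: mult_left_le)
  ultimately show ?thesis using assms by auto
qed

lemma path_tsubpath:
  assumes "path g" "u \<in> {0..1}" "w \<in> {0..1}"
  shows "path (tsubpath u w g)"
  unfolding path_def tsubpath_def
  by (rule continuous_on_compose2[OF assms(1)[unfolded path_def]])
     (auto intro!: continuous_intros affine_param_in_unit_interval assms)

lemma path_image_tsubpath_subset:
  "u \<in> {0..1} \<Longrightarrow> w \<in> {0..1} \<Longrightarrow> path_image (tsubpath u w g) \<subseteq> path_image g"
  using affine_param_in_unit_interval by (fastforce simp: path_image_def tsubpath_def)

lemma tsubpath_in_interval:
  assumes "u \<le> w" "s \<in> {0..1}"
  shows "\<exists>r \<in> {u..w}. tsubpath u w g s = g r"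
proof -
  have "0 \<le> (w - u) * s" "(w - u) * s \<le> w - u"
    using assms by (auto intro: mult_left_le)
  then show ?thesis
    unfolding tsubpath_def by (intro bexI[of _ "(w - u) * s + u"]) auto
qed

lemma pathstart_tsubpath [simp]: "pathstart (tsubpath u w g) = g u"
  and pathfinish_tsubpath [simp]: "pathfinish (tsubpath u w g) = g w"
  by (simp_all add: tsubpath_def pathstart_def pathfinish_def)

lemma path_const [simp]: "path (\<lambda>_::real. c)"
  by (simp add: path_def)

lemma path_image_const: "path_image (\<lambda>_::real. c) = {c}"
  by (auto simp: path_image_def)

lemma pathstart_const [simp]: "pathstart (\<lambda>_. c) = c"
  and pathfinish_const [simp]: "pathfinish (\<lambda>_. c) = c"
  by (simp_all add: pathstart_def pathfinish_def)

lemma homotopic_paths_rid_const: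
  assumes "path p" "path_image p \<subseteq> S"
  shows "homotopic_paths S (p +++ (\<lambda>_. pathfinish p)) p"
proof (rule homotopic_paths_sym, rule homotopic_paths_reparametrize[OF assms])
  show "continuous_on {0..1} (\<lambda>t::real. min 1 (2 * t))"
    by (intro continuous_intros)
  show "(p +++ (\<lambda>_. pathfinish p)) t = p (min 1 (2 * t))" for t
    by (simp add: joinpaths_def pathfinish_def)
qed auto

lemma homotopic_paths_lid_const:
  assumes "path p" "path_image p \<subseteq> S"
  shows "homotopic_paths S ((\<lambda>_. pathstart p) +++ p) p"
proof (rule homotopic_paths_sym, rule homotopic_paths_reparametrize[OF assms])
  show "continuous_on {0..1} (\<lambda>t::real. max 0 (2 * t - 1))"
    by (intro continuous_intros)
  show "((\<lambda>_. pathstart p) +++ p) t = p (max 0 (2 * t - 1))" for t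
    by (simp add: joinpaths_def pathstart_def)
qed auto

text \<open>At time s of the homotopy only p restricted to [0, 1 - s] is traversed, there and back.\<close>
lemma homotopic_paths_rinv_const:
  assumes "path p" "path_image p \<subseteq> S"
  shows "homotopic_paths S (p +++ reversepath p) (\<lambda>_. pathstart p)"
  unfolding homotopic_paths
proof (intro exI conjI)
  let ?param = "\<lambda>y::real \<times> real. (1 - fst y) * min (2 * snd y) (2 - 2 * snd y)"
  have param: "?param y \<in> {0..1}" if "y \<in> {0..1} \<times> {0..1}" for y
  proof -
    have "0 \<le> 1 - fst y" "1 - fst y \<le> 1" "0 \<le> min (2 * snd y) (2 - 2 * snd y)"
      "min (2 * snd y) (2 - 2 * snd y) \<le> 1"
      using that by auto
    then show ?thesis by (simp add: mult_le_one)
  qed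
  have "continuous_on ({0..1} \<times> {0..1}) ?param"
    by (intro continuous_intros)
  then show "continuous_on ({0..1} \<times> {0..1}) (\<lambda>y. p (?param y))"
    by (rule continuous_on_compose2[OF assms(1)[unfolded path_def]]) (use param in auto)
  show "(\<lambda>y. p (?param y)) \<in> {0..1} \<times> {0..1} \<rightarrow> S"
    using assms(2) param by (force simp: path_image_def)
  show "\<forall>t\<in>{0..1}. p (?param (0, t)) = (p +++ reversepath p) t"
  proof
    fix t :: real
    show "p (?param (0, t)) = (p +++ reversepath p) t"
      by (cases "t \<le> 1/2") (simp_all add: joinpaths_def reversepath_def)
  qed
qed (simp_all add: pathstart_def pathfinish_def joinpaths_def reversepath_def)

lemma homotopic_paths_linv_const:
  assumes "path p" "path_image p \<subseteq> S"
  shows "homotopic_paths S (reversepath p +++ p) (\<lambda>_. pathfinish p)"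
  using homotopic_paths_rinv_const[of "reversepath p" S] assms by simp

lemma homotopic_join_tsubpaths:
  assumes "path g" "path_image g \<subseteq> S" "u \<in> {0..1}" "w \<in> {0..1}" "u \<le> v" "v \<le> w" "u < w"
  shows "homotopic_paths S (tsubpath u v g +++ tsubpath v w g) (tsubpath u w g)"
proof (rule homotopic_paths_sym, rule homotopic_paths_reparametrize)
  define f where "f t = (min 1 (2 * t) * (v - u) + max 0 (2 * t - 1) * (w - v)) / (w - u)" for t :: real
  show "path (tsubpath u w g)" "path_image (tsubpath u w g) \<subseteq> S"
    using assms path_tsubpath path_image_tsubpath_subset by blast+
  show "continuous_on {0..1} f"
    unfolding f_def by (intro continuous_intros) (use assms in auto)
  show "f \<in> {0..1} \<rightarrow> {0..1}"
  proof
    fix t :: real assume "t \<in> {0..1}"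
    then have "min 1 (2 * t) * (v - u) \<in> {0..v - u}" "max 0 (2 * t - 1) * (w - v) \<in> {0..w - v}"
      using assms by (auto intro: mult_left_le_one_le)
    then show "f t \<in> {0..1}"
      using assms by (auto simp: f_def divide_le_eq_1)
  qed
  show "f 0 = 0" "f 1 = 1"
    using assms by (auto simp: f_def)
  show "(tsubpath u v g +++ tsubpath v w g) t = tsubpath u w g (f t)" for t
  proof -
    have scaled: "tsubpath u w g (f t) = g (min 1 (2 * t) * (v - u) + max 0 (2 * t - 1) * (w - v) + u)"
      using assms by (simp add: tsubpath_def f_def)
    show ?thesis
    proof (cases "t \<le> 1/2")
      case True
      then have "min 1 (2 * t) = 2 * t" "max 0 (2 * t - 1) = 0" by auto
      with True show ?thesis unfolding scaled by (simp add: joinpaths_def tsubpath_def algebra_simps)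
    next
      case False
      then have "min 1 (2 * t) = 1" "max 0 (2 * t - 1) = 2 * t - 1" by auto
      with False show ?thesis unfolding scaled by (simp add: joinpaths_def tsubpath_def algebra_simps)
    qed
  qed
qed

lemma homotopic_paths_left_cancel_const:
  assumes "path \<sigma>" "path_image \<sigma> \<subseteq> S" "path p" "path_image p \<subseteq> S"
    and "pathfinish \<sigma> = pathstart p" "homotopic_paths S (\<sigma> +++ p) \<sigma>"
  shows "homotopic_paths S p (\<lambda>_. pathstart p)"
proof -
  have rev: "path (reversepath \<sigma>)" "path_image (reversepath \<sigma>) \<subseteq> S"
    using assms by auto
  have "homotopic_paths S p ((\<lambda>_. pathfinish \<sigma>) +++ p)"
    using homotopic_paths_sym[OF homotopic_paths_lid_const[of p S]] assms by simp
  also have "homotopic_paths S \<dots> ((reversepath \<sigma> +++ \<sigma>) +++ p)"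
  proof (rule homotopic_paths_join)
    show "homotopic_paths S (\<lambda>_. pathfinish \<sigma>) (reversepath \<sigma> +++ \<sigma>)"
      using homotopic_paths_linv_const[of \<sigma> S] assms by (simp add: homotopic_paths_sym_eq)
  qed (use assms in auto)
  also have "homotopic_paths S \<dots> (reversepath \<sigma> +++ (\<sigma> +++ p))"
    using assms rev by (intro homotopic_paths_sym[OF homotopic_paths_assoc]) auto
  also have "homotopic_paths S \<dots> (reversepath \<sigma> +++ \<sigma>)"
    using assms rev by (intro homotopic_paths_join) auto
  also have "homotopic_paths S \<dots> (\<lambda>_. pathstart p)"
    using homotopic_paths_linv_const[of \<sigma> S] assms by simp
  finally show ?thesis .
qed

lemma homotopic_loops_const_along_path:
  assumes "path \<gamma>" "path_image \<gamma> \<subseteq> S"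
  shows "homotopic_loops S (\<lambda>_. pathstart \<gamma>) (\<lambda>_. pathfinish \<gamma>)"
  unfolding homotopic_loops
proof (intro exI conjI)
  show "continuous_on ({0..1} \<times> {0..1}) (\<lambda>y. \<gamma> (fst y))"
    using assms(1) unfolding path_def
    by (rule continuous_on_compose2) (auto intro: continuous_intros)
  show "(\<lambda>y. \<gamma> (fst y)) \<in> {0..1} \<times> {0..1} \<rightarrow> S"
    using assms(2) by (auto simp: path_image_def)
qed (auto simp: pathstart_def pathfinish_def)

section \<open>Simplices and full subcomplexes\<close>

definition vertex :: "'a \<Rightarrow> 'a \<Rightarrow> real"
  where "vertex v = (\<lambda>x. if x = v then 1 else 0)"

definition segment_path :: "('a \<Rightarrow> real) \<Rightarrow> ('a \<Rightarrow> real) \<Rightarrow> real \<Rightarrow> 'a \<Rightarrow> real"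
  where "segment_path f g t = (\<lambda>x. (1 - t) * f x + t * g x)"

definition simplices_in :: "'a::order set \<Rightarrow> 'a set set"
  where "simplices_in G = {D \<in> order_simplices. D \<subseteq> G}"

definition subcomplex :: "'a::order set \<Rightarrow> ('a \<Rightarrow> real) set"
  where "subcomplex G = (\<Union>D \<in> simplices_in G. geom_simplex D)"

lemma vertex_in_geom_simplex: "finite D \<Longrightarrow> v \<in> D \<Longrightarrow> vertex v \<in> geom_simplex D"
  by (auto simp: geom_simplex_def vertex_def)

lemma geom_simplex_pos_imp_mem: "f \<in> geom_simplex D \<Longrightarrow> 0 < f x \<Longrightarrow> x \<in> D"
  by (auto simp: geom_simplex_def)

lemma geom_simplex_ex_pos:
  assumes "f \<in> geom_simplex D"
  obtains x where "x \<in> D" "0 < f x"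
proof -
  have "sum f D \<noteq> 0" "\<forall>x. 0 \<le> f x" using assms by (auto simp: geom_simplex_def)
  then show thesis using that by (metis less_eq_real_def sum.neutral)
qed

lemma segment_path_in_geom_simplex:
  assumes "f \<in> geom_simplex D" "g \<in> geom_simplex D" "t \<in> {0..1}"
  shows "segment_path f g t \<in> geom_simplex D"
proof -
  have "(\<Sum>x\<in>D. (1 - t) * f x + t * g x) = (1 - t) * sum f D + t * sum g D"
    by (simp add: sum.distrib sum_distrib_left)
  then show ?thesis
    using assms by (auto simp: geom_simplex_def segment_path_def)
qed

lemma continuous_on_segment_path:
  fixes f g :: "'b::topological_space \<Rightarrow> 'a \<Rightarrow> real"
  assumes "continuous_on S t" "continuous_on S f" "continuous_on S g"
  shows "continuous_on S (\<lambda>y. segment_path (f y) (g y) (t y))"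
  unfolding segment_path_def
proof (rule continuous_on_coordinatewise_then_product)
  fix i
  have "continuous_on S (\<lambda>y. f y i)" "continuous_on S (\<lambda>y. g y i)"
    using assms by (auto intro: continuous_on_product_then_coordinatewise)
  then show "continuous_on S (\<lambda>y. (1 - t y) * f y i + t y * g y i)"
    using assms(1) by (intro continuous_intros)
qed

lemma path_segment_path [simp]: "path (segment_path f g)"
  unfolding path_def using continuous_on_segment_path[of "{0..1}" "\<lambda>t. t" "\<lambda>_. f" "\<lambda>_. g"]
  by (simp add: continuous_on_id)

lemma pathstart_segment_path [simp]: "pathstart (segment_path f g) = f"
  and pathfinish_segment_path [simp]: "pathfinish (segment_path f g) = g"
  by (auto simp: segment_path_def pathstart_def pathfinish_def)

lemma path_image_segment_path_subset:
  "f \<in> geom_simplex D \<Longrightarrow> g \<in> geom_simplex D \<Longrightarrow> path_image (segment_path f g) \<subseteq> geom_simplex D"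
  by (auto simp: path_image_def intro!: segment_path_in_geom_simplex)

lemma simplices_in_mono: "D \<in> simplices_in F \<Longrightarrow> F \<subseteq> G \<Longrightarrow> D \<in> simplices_in G"
  by (auto simp: simplices_in_def)

lemma finite_simplices_in: "finite G \<Longrightarrow> finite (simplices_in G)"
  by (rule finite_subset[of _ "Pow G"]) (auto simp: simplices_in_def)

lemma simplices_in_finite: "D \<in> simplices_in G \<Longrightarrow> finite D"
  by (simp add: simplices_in_def order_simplices_def)

lemma simplices_in_comparable: "D \<in> simplices_in G \<Longrightarrow> x \<in> D \<Longrightarrow> y \<in> D \<Longrightarrow> x \<le> y \<or> y \<le> x"
  by (auto simp: simplices_in_def order_simplices_def is_chain_def)

lemma geom_simplex_subset_subcomplex: "D \<in> simplices_in G \<Longrightarrow> geom_simplex D \<subseteq> subcomplex G"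
  by (auto simp: subcomplex_def)

lemma subcomplex_mono: "F \<subseteq> G \<Longrightarrow> subcomplex F \<subseteq> subcomplex G"
  by (auto simp: subcomplex_def simplices_in_def)

lemma subcomplex_subset_carrier: "subcomplex G \<subseteq> realization_carrier"
  by (auto simp: subcomplex_def simplices_in_def realization_carrier_def)

lemma subcomplexE:
  assumes "f \<in> subcomplex G"
  obtains D where "D \<in> simplices_in G" "f \<in> geom_simplex D"
  using assms by (auto simp: subcomplex_def)

lemma subcomplex_open_starE:
  assumes "f \<in> subcomplex G" "0 < f v"
  obtains D where "D \<in> simplices_in G" "f \<in> geom_simplex D" "v \<in> D"
  using assms by (meson subcomplexE geom_simplex_pos_imp_mem)

lemma vertex_in_subcomplex: "v \<in> G \<Longrightarrow> vertex v \<in> subcomplex G"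
  by (rule subsetD[OF geom_simplex_subset_subcomplex[of "{v}"]])
     (auto simp: simplices_in_def order_simplices_def is_chain_def vertex_in_geom_simplex)

text \<open>The straight-line homotopy stays in the subcomplex because simplices are convex.\<close>
lemma homotopic_paths_common_simplices:
  fixes g h :: "real \<Rightarrow> 'a::order \<Rightarrow> real"
  assumes "path g" "path h" "pathstart g = pathstart h" "pathfinish g = pathfinish h"
    and "\<And>t. t \<in> {0..1} \<Longrightarrow> \<exists>D \<in> simplices_in G. g t \<in> geom_simplex D \<and> h t \<in> geom_simplex D"
  shows "homotopic_paths (subcomplex G) g h"
  unfolding homotopic_paths
proof (intro exI conjI)
  let ?k = "\<lambda>y. segment_path (g (snd y)) (h (snd y)) (fst y)"
  have "continuous_on ({0..1} \<times> {0..1}) (\<lambda>y. p (snd y))" if "path p" for p :: "real \<Rightarrow> 'a \<Rightarrow> real"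
    using that unfolding path_def by (rule continuous_on_compose2) (auto intro: continuous_intros)
  with assms(1,2) show "continuous_on ({0..1} \<times> {0..1}) ?k"
    by (intro continuous_on_segment_path continuous_on_fst) auto
  show "?k \<in> {0..1} \<times> {0..1} \<rightarrow> subcomplex G"
  proof
    fix y :: "real \<times> real" assume "y \<in> {0..1} \<times> {0..1}"
    with assms(5) obtain D where "D \<in> simplices_in G" "g (snd y) \<in> geom_simplex D" "h (snd y) \<in> geom_simplex D"
      by force
    with \<open>y \<in> _\<close> show "?k y \<in> subcomplex G"
      using segment_path_in_geom_simplex geom_simplex_subset_subcomplex by (metis mem_Times_iff subsetD)
  qed
qed (use assms in \<open>auto simp: pathstart_def pathfinish_def segment_path_def fun_eq_iff algebra_simps\<close>)

lemma homotopic_paths_in_simplex: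
  fixes g h :: "real \<Rightarrow> 'a::order \<Rightarrow> real"
  assumes "path g" "path h" "pathstart g = pathstart h" "pathfinish g = pathfinish h"
    and "D \<in> simplices_in G" "path_image g \<subseteq> geom_simplex D" "path_image h \<subseteq> geom_simplex D"
  shows "homotopic_paths (subcomplex G) g h"
  using assms by (intro homotopic_paths_common_simplices) (auto simp: path_image_def intro!: bexI[of _ D])

section \<open>Topology of the realization\<close>

abbreviation realization :: "('a::order \<Rightarrow> real) topology"
  where "realization \<equiv> order_complex_realization TYPE('a)"

lemma openin_realization: "openin realization = realization_open"
  unfolding order_complex_realization_def
  by (rule topology_inverse'[OF istopology_realization_open])

lemma topspace_realization: "topspace realization = realization_carrier"
proof -
  have "realization_open (realization_carrier :: ('a \<Rightarrow> real) set)"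
    unfolding realization_open_def
  proof (intro conjI ballI)
    fix D :: "'a set" assume "D \<in> order_simplices"
    then have "realization_carrier \<inter> geom_simplex D = geom_simplex D"
      by (auto simp: realization_carrier_def)
    then show "openin (top_of_set (geom_simplex D)) (realization_carrier \<inter> geom_simplex D)"
      by simp
  qed simp
  then show ?thesis
    unfolding topspace_def openin_realization realization_open_def by blast
qed

lemma closed_geom_simplex: "closed (geom_simplex (D :: 'a set))"
proof -
  have eq: "geom_simplex D = (\<Inter>x. {f. 0 \<le> f x}) \<inter> (\<Inter>x \<in> -D. {f. f x = 0}) \<inter> {f. sum f D = 1}"
    by (auto simp: geom_simplex_def)
  have "closed {f :: 'a \<Rightarrow> real. 0 \<le> f x}" "closed {f :: 'a \<Rightarrow> real. f x = 0}" for x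
    by (rule closed_Collect_le closed_Collect_eq; auto intro: continuous_intros)+
  moreover have "closed {f :: 'a \<Rightarrow> real. sum f D = 1}"
    by (rule closed_Collect_eq) (auto intro!: continuous_intros continuous_on_sum)
  ultimately show ?thesis
    unfolding eq by (intro closed_Int closed_INT) auto
qed

lemma closedin_realization:
  "closedin realization C \<longleftrightarrow>
     C \<subseteq> realization_carrier \<and> (\<forall>D \<in> order_simplices. closed (C \<inter> geom_simplex D))"
proof -
  have "openin (top_of_set (geom_simplex D)) ((realization_carrier - C) \<inter> geom_simplex D)
          \<longleftrightarrow> closed (C \<inter> geom_simplex D)" if "D \<in> order_simplices" for D
  proof -
    have "(realization_carrier - C) \<inter> geom_simplex D = geom_simplex D - C \<inter> geom_simplex D"
      using that by (auto simp: realization_carrier_def)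
    moreover have "closedin (top_of_set (geom_simplex D)) (C \<inter> geom_simplex D)
                     \<longleftrightarrow> openin (top_of_set (geom_simplex D)) (geom_simplex D - C \<inter> geom_simplex D)"
      by (simp add: closedin_def)
    ultimately show ?thesis
      using closedin_closed_eq[OF closed_geom_simplex] by auto
  qed
  then show ?thesis
    unfolding closedin_def topspace_realization openin_realization realization_open_def by auto
qed

lemma continuous_map_realization_euclidean: "continuous_map realization euclidean (\<lambda>f. f)"
  unfolding continuous_map_closedin
proof (intro conjI allI impI)
  show "(\<lambda>f. f) \<in> topspace realization \<rightarrow> topspace euclidean" by simp
  fix C :: "('a \<Rightarrow> real) set" assume "closedin euclidean C"
  moreover have "{f \<in> realization_carrier. f \<in> C} \<inter> geom_simplex D = C \<inter> geom_simplex D"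
    if "D \<in> order_simplices" for D
    using that by (auto simp: realization_carrier_def)
  ultimately show "closedin realization {f \<in> topspace realization. f \<in> C}"
    by (auto simp: closedin_realization topspace_realization closed_geom_simplex intro: closed_Int)
qed

lemma path_if_pathin_realization:
  assumes "pathin realization p"
  shows "path p"
  using continuous_map_compose[OF assms[unfolded pathin_def] continuous_map_realization_euclidean]
  by (simp add: path_def o_def)

lemma continuous_map_subcomplex_realization:
  assumes "finite G"
  shows "continuous_map (top_of_set (subcomplex G)) realization (\<lambda>f. f)"
  unfolding continuous_map_closedin
proof (intro conjI allI impI)
  show "(\<lambda>f. f) \<in> topspace (top_of_set (subcomplex G)) \<rightarrow> topspace realization"
    using subcomplex_subset_carrier by (auto simp: topspace_realization)
  fix C :: "('a \<Rightarrow> real) set" assume "closedin realization C"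
  then have "closed (C \<inter> geom_simplex D)" if "D \<in> simplices_in G" for D
    using that by (auto simp: closedin_realization simplices_in_def)
  then have "closed (C \<inter> subcomplex G)"
    using finite_simplices_in[OF assms] unfolding subcomplex_def Int_UN_distrib
    by (intro closed_UN) auto
  then show "closedin (top_of_set (subcomplex G)) {f \<in> topspace (top_of_set (subcomplex G)). f \<in> C}"
    unfolding closedin_closed by (intro exI[of _ "C \<inter> subcomplex G"]) auto
qed

lemma homotopic_loops_imp_homotopic_in_realization:
  assumes "homotopic_loops (subcomplex G) p q" "finite G"
  shows "homotopic_with (\<lambda>r. r 1 = r 0) (top_of_set {0..1}) realization p q"
  using homotopic_with_compose_continuous_map_left[
      OF assms(1)[unfolded homotopic_loops_def] continuous_map_subcomplex_realization[OF assms(2)],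
      of "\<lambda>r. r 1 = r 0"]
  by (simp add: o_def pathstart_def pathfinish_def)

lemma finite_if_compactin_discrete:
  assumes "compactin X D" "\<And>E. E \<subseteq> D \<Longrightarrow> closedin X E"
  shows "finite D"
proof -
  have D: "D \<subseteq> topspace X"
    using assms(1) by (rule compactin_subset_topspace)
  have "openin (subtopology X D) {x}" if "x \<in> D" for x
    using openin_subtopology_diff_closed[OF D assms(2)[of "D - {x}"]] that
    by (simp add: Diff_Diff_Int Int_absorb1)
  then have "discrete_topology D = subtopology X D"
    using D by (simp add: discrete_topology_unique inf.absorb2)
  then show ?thesis
    using assms(1) by (metis compactin_subspace compact_space_discrete_topology)
qed

lemma closed_finite_function_set:
  assumes "finite (S :: ('a \<Rightarrow> real) set)"
  shows "closed S"
proof -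
  have "closed {f}" for f :: "'a \<Rightarrow> real"
  proof -
    have "{f} = (\<Inter>x. {g. g x = f x})" by (auto simp: fun_eq_iff)
    moreover have "closed {g :: 'a \<Rightarrow> real. g x = f x}" for x
      by (rule closed_Collect_eq) (auto intro: continuous_intros)
    ultimately show ?thesis by auto
  qed
  then have "closed (\<Union>f \<in> S. {f})"
    using assms by (intro closed_UN) auto
  then show ?thesis by simp
qed

lemma geom_simplex_support_subset: "f \<in> geom_simplex D \<Longrightarrow> {x. 0 < f x} \<subseteq> D"
  by (auto dest: geom_simplex_pos_imp_mem)

lemma finite_support_if_in_carrier: "f \<in> realization_carrier \<Longrightarrow> finite {x. 0 < f x}"
  unfolding realization_carrier_def order_simplices_def
  using finite_subset[OF geom_simplex_support_subset] by blast

lemma closedin_realization_if_finite_traces: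
  assumes "E \<subseteq> realization_carrier" "\<And>D. D \<in> order_simplices \<Longrightarrow> finite (E \<inter> geom_simplex D)"
  shows "closedin realization E"
  using assms by (auto simp: closedin_realization intro!: closed_finite_function_set)

text \<open>Choosing, for every vertex in the support, one point of K that is positive there gives a set
  meeting each simplex in finitely many points; it is therefore discrete and compact, hence finite.\<close>
lemma finite_support_if_compactin_realization:
  assumes "compactin realization K"
  shows "finite {x. \<exists>f\<in>K. 0 < f x}"
proof -
  define S where "S = {x. \<exists>f\<in>K. 0 < f x}"
  define d where "d x = (SOME f. f \<in> K \<and> 0 < f x)" for x
  have d: "d x \<in> K" "0 < d x x" if "x \<in> S" for x
    using someI_ex[of "\<lambda>f. f \<in> K \<and> 0 < f x"] that by (auto simp: S_def d_def)
  have dS: "d ` S \<subseteq> K"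
    using d(1) by (rule image_subsetI)
  then have carrier: "d ` S \<subseteq> realization_carrier"
    using compactin_subset_topspace[OF assms] by (auto simp: topspace_realization)
  have closed: "closedin realization E" if E: "E \<subseteq> d ` S" for E
  proof (rule closedin_realization_if_finite_traces)
    show "E \<subseteq> realization_carrier" using E carrier by blast
    fix D :: "'a set" assume "D \<in> order_simplices"
    have "E \<inter> geom_simplex D \<subseteq> d ` (S \<inter> D)"
    proof
      fix y assume y: "y \<in> E \<inter> geom_simplex D"
      with E obtain x where x: "x \<in> S" "y = d x" by blast
      with y have "x \<in> D"
        using d(2)[OF x(1)] geom_simplex_pos_imp_mem[of y D x] by simp
      with x show "y \<in> d ` (S \<inter> D)" by blast
    qed
    moreover have "finite (d ` (S \<inter> D))"
      using \<open>D \<in> order_simplices\<close> by (simp add: order_simplices_def)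
    ultimately show "finite (E \<inter> geom_simplex D)"
      by (rule finite_subset)
  qed
  have "compactin realization (d ` S)"
    by (rule closed_compactin[OF assms dS closed]) simp
  then have "finite (d ` S)"
    using closed by (rule finite_if_compactin_discrete)
  then have "finite (\<Union>f \<in> d ` S. {x. 0 < f x})"
    by (rule finite_UN_I) (use carrier finite_support_if_in_carrier in auto)
  moreover have "S \<subseteq> (\<Union>f \<in> d ` S. {x. 0 < f x})"
  proof
    fix x assume "x \<in> S"
    then show "x \<in> (\<Union>f \<in> d ` S. {x. 0 < f x})"
      using d(2)[OF \<open>x \<in> S\<close>] by blast
  qed
  ultimately show ?thesis
    unfolding S_def[symmetric] by (rule finite_subset[rotated])
qed

lemma subcomplex_if_support_subset:
  assumes "f \<in> realization_carrier" "{x. 0 < f x} \<subseteq> S"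
  shows "f \<in> subcomplex S"
proof -
  obtain C where C: "C \<in> order_simplices" "f \<in> geom_simplex C"
    using assms(1) by (auto simp: realization_carrier_def)
  have nonneg: "\<forall>x. 0 \<le> f x" and sum: "sum f C = 1" and outside: "\<forall>x. x \<notin> C \<longrightarrow> f x = 0"
    using C(2) by (simp_all add: geom_simplex_def)
  have zero: "\<forall>x. x \<notin> C \<inter> S \<longrightarrow> f x = 0"
    using nonneg outside assms(2) by (force simp: less_eq_real_def)
  have "sum f (C \<inter> S) = sum f C"
    by (rule sum.mono_neutral_left) (use C(1) zero in \<open>auto simp: order_simplices_def\<close>)
  with nonneg sum zero have f: "f \<in> geom_simplex (C \<inter> S)"
    unfolding geom_simplex_def by simp
  then obtain x where "x \<in> C \<inter> S" by (rule geom_simplex_ex_pos)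
  then have "C \<inter> S \<in> simplices_in S"
    using C(1) by (auto simp: simplices_in_def order_simplices_def is_chain_def)
  with f show ?thesis
    using geom_simplex_subset_subcomplex by blast
qed

section \<open>Edge paths along walks of comparable elements\<close>

definition comparable :: "'a::order \<Rightarrow> 'a \<Rightarrow> bool"
  where "comparable x y \<longleftrightarrow> x \<le> y \<or> y \<le> x"

definition edge :: "'a \<Rightarrow> 'a \<Rightarrow> real \<Rightarrow> 'a \<Rightarrow> real"
  where "edge u v = segment_path (vertex u) (vertex v)"

fun edge_path :: "'a list \<Rightarrow> real \<Rightarrow> 'a \<Rightarrow> real" where
  "edge_path [] = (\<lambda>_ _. 0)"
| "edge_path [x] = (\<lambda>_. vertex x)"
| "edge_path (x # y # ys) = edge x y +++ edge_path (y # ys)"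

definition walk_in :: "'a::order set \<Rightarrow> 'a list \<Rightarrow> bool"
  where "walk_in G xs \<longleftrightarrow> xs \<noteq> [] \<and> set xs \<subseteq> G \<and> successively comparable xs"

definition walk_homotopic :: "'a::order set \<Rightarrow> 'a list \<Rightarrow> 'a list \<Rightarrow> bool"
  where "walk_homotopic G xs ys \<longleftrightarrow> homotopic_paths (subcomplex G) (edge_path xs) (edge_path ys)"

lemma path_edge [simp]: "path (edge u v)"
  and pathstart_edge [simp]: "pathstart (edge u v) = vertex u"
  and pathfinish_edge [simp]: "pathfinish (edge u v) = vertex v"
  by (simp_all add: edge_def)

lemma path_image_edge_subset:
  "finite D \<Longrightarrow> u \<in> D \<Longrightarrow> v \<in> D \<Longrightarrow> path_image (edge u v) \<subseteq> geom_simplex D"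
  unfolding edge_def by (intro path_image_segment_path_subset vertex_in_geom_simplex)

lemma chain_in_simplices_in:
  assumes "finite D" "D \<noteq> {}" "D \<subseteq> G" "\<And>x y. x \<in> D \<Longrightarrow> y \<in> D \<Longrightarrow> comparable x y"
  shows "D \<in> simplices_in G"
  using assms by (auto simp: simplices_in_def order_simplices_def is_chain_def comparable_def)

lemma path_image_edge_subcomplex:
  assumes "u \<in> G" "v \<in> G" "comparable u v"
  shows "path_image (edge u v) \<subseteq> subcomplex G"
proof -
  have "{u, v} \<in> simplices_in G"
    using assms by (intro chain_in_simplices_in) (auto simp: comparable_def)
  then show ?thesis
    using path_image_edge_subset[of "{u, v}" u v] geom_simplex_subset_subcomplex by blast
qed

lemma pathstart_edge_path: "xs \<noteq> [] \<Longrightarrow> pathstart (edge_path xs) = vertex (hd xs)"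
  by (induction xs rule: edge_path.induct) auto

lemma pathfinish_edge_path: "xs \<noteq> [] \<Longrightarrow> pathfinish (edge_path xs) = vertex (last xs)"
  by (induction xs rule: edge_path.induct) auto

lemma edge_path_Cons: "xs \<noteq> [] \<Longrightarrow> edge_path (x # xs) = edge x (hd xs) +++ edge_path xs"
  by (cases xs) auto

lemma walk_in_Cons_Cons [simp]: "walk_in G (x # y # xs) \<longleftrightarrow> x \<in> G \<and> comparable x y \<and> walk_in G (y # xs)"
  by (auto simp: walk_in_def)

lemma walk_in_single [simp]: "walk_in G [x] \<longleftrightarrow> x \<in> G"
  by (simp add: walk_in_def)

lemma walk_in_Cons: "xs \<noteq> [] \<Longrightarrow> walk_in G (x # xs) \<longleftrightarrow> x \<in> G \<and> comparable x (hd xs) \<and> walk_in G xs"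
  by (cases xs) auto

lemma walk_in_replace_tail:
  assumes "walk_in G (pre @ x # xs)" "walk_in G (x # ys)"
  shows "walk_in G (pre @ x # ys)"
  using assms by (auto simp: walk_in_def successively_append_iff)

lemma walk_in_appendD:
  assumes "walk_in G (xs @ ys)"
  shows "xs \<noteq> [] \<Longrightarrow> walk_in G xs" and "ys \<noteq> [] \<Longrightarrow> walk_in G ys"
    and "xs \<noteq> [] \<Longrightarrow> ys \<noteq> [] \<Longrightarrow> comparable (last xs) (hd ys)"
  using assms by (auto simp: walk_in_def successively_append_iff)

lemma edge_path_walk_in:
  assumes "walk_in G xs"
  shows "path (edge_path xs) \<and> path_image (edge_path xs) \<subseteq> subcomplex G"
  using assms
proof (induction xs rule: edge_path.induct)
  case (3 x y ys)
  then have "path_image (edge x y) \<subseteq> subcomplex G"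
    by (intro path_image_edge_subcomplex) (auto simp: walk_in_def)
  with 3 show ?case
    using subset_path_image_join[of "edge x y" "subcomplex G" "edge_path (y # ys)"]
    by (simp add: pathstart_edge_path)
qed (auto simp: walk_in_def path_image_const vertex_in_subcomplex)

lemma walk_homotopic_refl: "walk_in G xs \<Longrightarrow> walk_homotopic G xs xs"
  using edge_path_walk_in[of G xs] by (simp add: walk_homotopic_def)

lemma walk_homotopic_sym: "walk_homotopic G xs ys \<Longrightarrow> walk_homotopic G ys xs"
  unfolding walk_homotopic_def by (rule homotopic_paths_sym)

lemma walk_homotopic_trans [trans]:
  "walk_homotopic G xs ys \<Longrightarrow> walk_homotopic G ys zs \<Longrightarrow> walk_homotopic G xs zs"
  unfolding walk_homotopic_def by (rule homotopic_paths_trans)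

lemma walk_homotopic_Cons:
  assumes "walk_homotopic G xs ys" "walk_in G (x # xs)" "xs \<noteq> []" "ys \<noteq> []" "hd xs = hd ys"
  shows "walk_homotopic G (x # xs) (x # ys)"
  unfolding walk_homotopic_def edge_path_Cons[OF assms(3)] edge_path_Cons[OF assms(4)]
proof (rule homotopic_paths_join)
  have "x \<in> G" "hd xs \<in> G" "comparable x (hd xs)"
    using assms(2) walk_in_Cons[OF assms(3)] by (auto simp: walk_in_def)
  then show "homotopic_paths (subcomplex G) (edge x (hd xs)) (edge x (hd ys))"
    using assms(5) path_image_edge_subcomplex by simp
qed (use assms in \<open>auto simp: walk_homotopic_def pathstart_edge_path\<close>)

lemma walk_homotopic_triangle:
  assumes "walk_in G (pre @ x # y # z # suf)" "comparable x z"
  shows "walk_homotopic G (pre @ x # y # z # suf) (pre @ x # z # suf)"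
  using assms(1)
proof (induction pre)
  case Nil
  let ?S = "subcomplex G" and ?rest = "edge_path (z # suf)"
  have G: "x \<in> G" "y \<in> G" "z \<in> G" "comparable x y" "comparable y z" "walk_in G (z # suf)"
    using Nil by (auto simp: walk_in_def)
  have triangle: "{x, y, z} \<in> simplices_in G"
    using G assms(2) by (intro chain_in_simplices_in) (auto simp: comparable_def)
  have rest: "path ?rest" "path_image ?rest \<subseteq> ?S" "pathstart ?rest = vertex z"
    using edge_path_walk_in[OF G(6)] by (auto simp: pathstart_edge_path)
  have edges: "path_image (edge x y) \<subseteq> ?S" "path_image (edge y z) \<subseteq> ?S"
    using G by (simp_all add: path_image_edge_subcomplex)
  have "homotopic_paths ?S (edge x y +++ (edge y z +++ ?rest)) ((edge x y +++ edge y z) +++ ?rest)"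
    using rest edges by (intro homotopic_paths_assoc) simp_all
  also have "homotopic_paths ?S \<dots> (edge x z +++ ?rest)"
  proof (rule homotopic_paths_join)
    show "homotopic_paths ?S (edge x y +++ edge y z) (edge x z)"
      using triangle
      by (intro homotopic_paths_in_simplex[of _ _ "{x, y, z}"] subset_path_image_join path_image_edge_subset)
         auto
  qed (use rest in auto)
  finally show ?case by (simp add: walk_homotopic_def)
next
  case (Cons a pre)
  have "walk_in G (pre @ x # y # z # suf)"
    using walk_in_appendD(2)[of G "[a]"] Cons.prems by simp
  then show ?case
    unfolding append_Cons
    by (rule walk_homotopic_Cons[OF Cons.IH]) (use Cons.prems in \<open>cases pre; simp\<close>)+
qed

lemma walk_homotopic_absorb:
  assumes "walk_in G (pre @ M # xs @ z # suf)" "\<forall>v \<in> set xs. v \<le> M" "z \<le> M"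
  shows "walk_homotopic G (pre @ M # xs @ z # suf) (pre @ M # z # suf)"
  using assms
proof (induction xs)
  case Nil
  then show ?case by (simp add: walk_homotopic_refl)
next
  case (Cons y xs)
  obtain n rest where n: "xs @ z # suf = n # rest" "n \<le> M"
    using Cons.prems(2,3) by (cases xs) auto
  have long: "walk_in G (pre @ M # y # n # rest)"
    using Cons.prems(1) n(1) by simp
  then have "walk_in G (M # y # n # rest)"
    by (rule walk_in_appendD(2)) simp
  then have short: "walk_in G (pre @ M # xs @ z # suf)"
    unfolding n(1) using n(2) by (intro walk_in_replace_tail[OF long]) (auto simp: comparable_def)
  have "walk_homotopic G (pre @ M # y # xs @ z # suf) (pre @ M # xs @ z # suf)"
    unfolding n(1) using long n(2) by (intro walk_homotopic_triangle) (auto simp: comparable_def)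
  also have "walk_homotopic G \<dots> (pre @ M # z # suf)"
    using Cons.IH short Cons.prems(2,3) by simp
  finally show ?case by simp
qed

lemma walk_homotopic_apex:
  assumes "walk_in G (pre @ x # xs @ z # suf)" "M \<in> G" "x \<le> M" "\<forall>v \<in> set xs. v \<le> M" "z \<le> M"
  shows "walk_homotopic G (pre @ x # xs @ z # suf) (pre @ x # M # z # suf)"
proof -
  obtain n rest where n: "xs @ z # suf = n # rest" "n \<le> M"
    using assms(4,5) by (cases xs) auto
  have short: "walk_in G (pre @ x # n # rest)"
    using assms(1) unfolding n(1) .
  then have "walk_in G (x # n # rest)"
    by (rule walk_in_appendD(2)) simp
  then have "walk_in G (x # M # n # rest)" "comparable x n"
    using assms(2,3) n(2) by (auto simp: comparable_def)
  moreover from this(1) have long: "walk_in G (pre @ x # M # n # rest)"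
    by (rule walk_in_replace_tail[OF short])
  ultimately have "walk_homotopic G (pre @ x # M # n # rest) (pre @ x # n # rest)"
    by (intro walk_homotopic_triangle)
  then have "walk_homotopic G (pre @ x # xs @ z # suf) (pre @ x # M # xs @ z # suf)"
    unfolding n(1) by (rule walk_homotopic_sym)
  also have "walk_homotopic G \<dots> ((pre @ [x]) @ M # z # suf)"
    using walk_homotopic_absorb[of G "pre @ [x]" M xs z suf] long assms(4,5) n(1) by simp
  finally show ?thesis by simp
qed

text \<open>Both walks are homotopic to the walk x, M, z.\<close>
lemma walk_homotopic_cone:
  assumes "walk_in G (pre @ x # xs @ z # suf)" "walk_in G (pre @ x # ys @ z # suf)" "M \<in> G"
    and "\<forall>v \<in> set (x # z # xs @ ys). v \<le> M"
  shows "walk_homotopic G (pre @ x # xs @ z # suf) (pre @ x # ys @ z # suf)"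
proof -
  have "walk_homotopic G (pre @ x # xs @ z # suf) (pre @ x # M # z # suf)"
    using assms(4) by (intro walk_homotopic_apex[OF assms(1,3)]) simp_all
  moreover have "walk_homotopic G (pre @ x # ys @ z # suf) (pre @ x # M # z # suf)"
    using assms(4) by (intro walk_homotopic_apex[OF assms(2,3)]) simp_all
  ultimately show ?thesis
    by (rule walk_homotopic_trans[OF _ walk_homotopic_sym])
qed

lemma edge_path_snoc:
  assumes "walk_in G (xs @ [v])" "xs \<noteq> []"
  shows "homotopic_paths (subcomplex G) (edge_path xs +++ edge (last xs) v) (edge_path (xs @ [v]))"
  using assms
proof (induction xs rule: edge_path.induct)
  case (2 x)
  have "path_image (edge x v) \<subseteq> subcomplex G"
    using "2.prems" by (intro path_image_edge_subcomplex) auto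
  then have "homotopic_paths (subcomplex G) ((\<lambda>_. vertex x) +++ edge x v) (edge x v)"
    and "homotopic_paths (subcomplex G) (edge x v +++ (\<lambda>_. vertex v)) (edge x v)"
    using homotopic_paths_lid_const[of "edge x v"] homotopic_paths_rid_const[of "edge x v"] by simp_all
  then have "homotopic_paths (subcomplex G) ((\<lambda>_. vertex x) +++ edge x v) (edge x v +++ (\<lambda>_. vertex v))"
    by (rule homotopic_paths_trans[OF _ homotopic_paths_sym])
  then show ?case by simp
next
  case (3 x y ys)
  let ?S = "subcomplex G" and ?P = "edge_path (y # ys)"
  have walk: "walk_in G ((y # ys) @ [v])" "x \<in> G" "comparable x y"
    using "3.prems" by auto
  have P: "path ?P" "path_image ?P \<subseteq> ?S"
    using edge_path_walk_in[OF walk_in_appendD(1)[OF walk(1)]] by simp_all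
  have "last (y # ys) \<in> G" "comparable (last (y # ys)) v"
    using walk_in_appendD[OF walk(1)] by (auto simp: walk_in_def)
  then have edges: "path_image (edge x y) \<subseteq> ?S" "path_image (edge (last (y # ys)) v) \<subseteq> ?S"
    using walk by (simp_all add: path_image_edge_subcomplex walk_in_def)
  have "homotopic_paths ?S ((edge x y +++ ?P) +++ edge (last (y # ys)) v) (edge x y +++ (?P +++ edge (last (y # ys)) v))"
    using P edges
    by (intro homotopic_paths_sym[OF homotopic_paths_assoc]) (simp_all add: pathstart_edge_path pathfinish_edge_path)
  also have "homotopic_paths ?S \<dots> (edge x y +++ edge_path ((y # ys) @ [v]))"
    using "3.IH" walk edges(1)
    by (intro homotopic_paths_join) (simp_all add: pathstart_edge_path)
  finally show ?case by simp
qed simp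


section \<open>Joins of atoms and base walks\<close>

definition join_of :: "'a::order set \<Rightarrow> 'a"
  where "join_of S = (THE j. is_join S j)"

lemma is_join_unique: "is_join S j \<Longrightarrow> is_join S j' \<Longrightarrow> j = j'"
  by (auto simp: is_join_def intro: order_antisym)

lemma join_of_eq: "is_join S j \<Longrightarrow> join_of S = j"
  unfolding join_of_def using is_join_unique by blast

lemma le_imp_comparable: "x \<le> y \<Longrightarrow> comparable x y"
  and ge_imp_comparable: "y \<le> x \<Longrightarrow> comparable x y"
  by (simp_all add: comparable_def)

locale bridged_atomized_poset =
  fixes a0 :: "'a::order"
  assumes atomized: "atomized TYPE('a)"
    and no_two_atoms_generate: "\<forall>a1 a2::'a. is_atom a1 \<and> is_atom a2 \<longrightarrow> \<not> generates {a1, a2}"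
    and atom_a0: "is_atom a0"
    and bridge: "\<forall>a1 a2::'a. is_atom a1 \<and> is_atom a2 \<longrightarrow>
           (\<exists>a3. is_atom a3 \<and> has_upper_bound {a1, a2, a3} \<and>
                 has_upper_bound {a0, a1, a3} \<and> has_upper_bound {a0, a2, a3})"
begin

lemma is_join_join_of:
  fixes S :: "'a set"
  assumes "finite S" "S \<noteq> {}" "\<forall>a\<in>S. is_atom a" "has_upper_bound S"
  shows "is_join S (join_of S)"
proof -
  obtain j where "is_join S j"
    using atomized assms unfolding atomized_def by blast
  then show ?thesis by (simp add: join_of_eq)
qed

lemma upper_join_of:
  fixes S :: "'a set"
  shows "finite S \<Longrightarrow> S \<noteq> {} \<Longrightarrow> \<forall>a\<in>S. is_atom a \<Longrightarrow> has_upper_bound S \<Longrightarrow> s \<in> S \<Longrightarrow> s \<le> join_of S"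
  using is_join_join_of[of S] by (simp add: is_join_def)

lemma join_of_least:
  fixes S :: "'a set"
  shows "finite S \<Longrightarrow> S \<noteq> {} \<Longrightarrow> \<forall>a\<in>S. is_atom a \<Longrightarrow> has_upper_bound S \<Longrightarrow> \<forall>s\<in>S. s \<le> u \<Longrightarrow> join_of S \<le> u"
  using is_join_join_of[of S] by (simp add: is_join_def)

lemma atom_pair_bounded:
  fixes x y :: 'a
  assumes "is_atom x" "is_atom y"
  shows "has_upper_bound {x, y}"
  using no_two_atoms_generate assms by (simp add: generates_def)

definition atom_below :: "'a \<Rightarrow> 'a"
  where "atom_below w = (SOME a. is_atom a \<and> a \<le> w)"

lemma atom_below: "is_atom (atom_below w)" "atom_below w \<le> w"
proof -
  have "\<exists>a. is_atom a \<and> a \<le> w"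
    using atomized by (simp add: atomized_def)
  then show "is_atom (atom_below w)" "atom_below w \<le> w"
    unfolding atom_below_def by (metis (mono_tags, lifting) someI_ex)+
qed

definition bridge_atom :: "'a \<Rightarrow> 'a \<Rightarrow> 'a"
  where "bridge_atom x y = (SOME c. is_atom c \<and> has_upper_bound {x, y, c} \<and>
                                    has_upper_bound {a0, x, c} \<and> has_upper_bound {a0, y, c})"

lemma bridge_atom:
  assumes "is_atom x" "is_atom y"
  shows "is_atom (bridge_atom x y)" "has_upper_bound {x, y, bridge_atom x y}"
    "has_upper_bound {a0, x, bridge_atom x y}" "has_upper_bound {a0, y, bridge_atom x y}"
proof -
  have "\<exists>c. is_atom c \<and> has_upper_bound {x, y, c} \<and> has_upper_bound {a0, x, c} \<and> has_upper_bound {a0, y, c}"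
    using bridge assms by blast
  from someI_ex[OF this] show "is_atom (bridge_atom x y)" "has_upper_bound {x, y, bridge_atom x y}"
    "has_upper_bound {a0, x, bridge_atom x y}" "has_upper_bound {a0, y, bridge_atom x y}"
    unfolding bridge_atom_def by blast+
qed

text \<open>The join of a0 and atom_below w exists because no two atoms generate P.\<close>
definition base_walk :: "'a \<Rightarrow> 'a list"
  where "base_walk w = [a0, join_of {a0, atom_below w}, atom_below w, w]"

definition relevant_atoms :: "'a set \<Rightarrow> 'a set"
  where "relevant_atoms F =
    insert a0 (atom_below ` F \<union> (\<lambda>(x, y). bridge_atom x y) ` (atom_below ` F \<times> atom_below ` F))"

text \<open>All vertices used by the combinatorial moves; it is finite when F is, which makes the
  homotopies in its subcomplex continuous for the weak topology.\<close>
definition enlarged :: "'a set \<Rightarrow> 'a set"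
  where "enlarged F = F \<union> relevant_atoms F \<union>
    join_of ` {S. S \<subseteq> relevant_atoms F \<and> S \<noteq> {} \<and> has_upper_bound S}"

lemma finite_enlarged: "finite F \<Longrightarrow> finite (enlarged F)"
  by (simp add: enlarged_def relevant_atoms_def)

lemma relevant_atoms_are_atoms: "x \<in> relevant_atoms F \<Longrightarrow> is_atom x"
  using atom_a0 atom_below bridge_atom by (auto simp: relevant_atoms_def)

lemma subset_enlarged: "F \<subseteq> enlarged F" "relevant_atoms F \<subseteq> enlarged F"
  by (auto simp: enlarged_def)

lemma join_of_mem_enlarged:
  "S \<subseteq> relevant_atoms F \<Longrightarrow> S \<noteq> {} \<Longrightarrow> has_upper_bound S \<Longrightarrow> join_of S \<in> enlarged F"
  by (auto simp: enlarged_def)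

lemma walk_in_base_walk:
  assumes "w \<in> F"
  shows "walk_in (enlarged F) (base_walk w)"
proof -
  let ?a = "atom_below w"
  have A: "?a \<in> relevant_atoms F" "a0 \<in> relevant_atoms F"
    using assms by (auto simp: relevant_atoms_def)
  then have bounded: "has_upper_bound {a0, ?a}"
    by (intro atom_pair_bounded relevant_atoms_are_atoms)
  have "a0 \<le> join_of {a0, ?a}" "?a \<le> join_of {a0, ?a}"
    using A bounded relevant_atoms_are_atoms by (auto intro!: upper_join_of)
  moreover have "join_of {a0, ?a} \<in> enlarged F"
    using A bounded by (intro join_of_mem_enlarged) auto
  ultimately show ?thesis
    using A assms subset_enlarged atom_below(2)[of w]
    by (auto simp: base_walk_def le_imp_comparable ge_imp_comparable)
qed

text \<open>This is where the hypothesis on a0 enters: cones over the joins of {a, b, c}, {a0, a, c}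
  and {a0, b, c} carry the walk through a and b over to the walk through a0 and b.\<close>
lemma walk_homotopic_bridge:
  assumes "a \<in> relevant_atoms F" "b \<in> relevant_atoms F" "c \<in> relevant_atoms F"
    and "has_upper_bound {a, b, c}" "has_upper_bound {a0, a, c}" "has_upper_bound {a0, b, c}"
    and "walk_in (enlarged F) (b # suf)"
  shows "walk_homotopic (enlarged F)
           (a0 # join_of {a0, a} # a # join_of {a, b} # b # suf) (a0 # join_of {a0, b} # b # suf)"
proof -
  let ?G = "enlarged F"
  have A: "a0 \<in> relevant_atoms F"
    by (simp add: relevant_atoms_def)
  with assms(1-3) have atoms: "is_atom a" "is_atom b" "is_atom c" "is_atom a0"
    by (auto intro: relevant_atoms_are_atoms)
  have bounded: "has_upper_bound {a0, a}" "has_upper_bound {a0, b}" "has_upper_bound {a0, c}"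
    "has_upper_bound {a, b}" "has_upper_bound {a, c}" "has_upper_bound {b, c}"
    using atoms by (simp_all add: atom_pair_bounded)
  define ma mb mc where "ma = join_of {a0, a}" and "mb = join_of {a0, b}" and "mc = join_of {a0, c}"
  define jab jac jbc where "jab = join_of {a, b}" and "jac = join_of {a, c}" and "jbc = join_of {b, c}"
  define J M1 M2 where "J = join_of {a, b, c}" and "M1 = join_of {a0, a, c}" and "M2 = join_of {a0, b, c}"
  have mem: "ma \<in> ?G" "mb \<in> ?G" "mc \<in> ?G" "jab \<in> ?G" "jac \<in> ?G" "jbc \<in> ?G"
    "J \<in> ?G" "M1 \<in> ?G" "M2 \<in> ?G" "a \<in> ?G" "b \<in> ?G" "c \<in> ?G" "a0 \<in> ?G"
    unfolding ma_def mb_def mc_def jab_def jac_def jbc_def J_def M1_def M2_def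
    using A assms bounded subset_enlarged by (auto intro!: join_of_mem_enlarged)
  have le: "a0 \<le> ma" "a \<le> ma" "a0 \<le> mb" "b \<le> mb" "a0 \<le> mc" "c \<le> mc"
    "a \<le> jab" "b \<le> jab" "a \<le> jac" "c \<le> jac" "b \<le> jbc" "c \<le> jbc"
    "a \<le> J" "b \<le> J" "c \<le> J" "a0 \<le> M1" "a \<le> M1" "c \<le> M1" "a0 \<le> M2" "b \<le> M2" "c \<le> M2"
    unfolding ma_def mb_def mc_def jab_def jac_def jbc_def J_def M1_def M2_def
    using atoms bounded assms(4-6) by (auto intro!: upper_join_of)
  then have "jab \<le> J" "jac \<le> J" "jbc \<le> J" "ma \<le> M1" "jac \<le> M1" "mc \<le> M1"
    "mc \<le> M2" "jbc \<le> M2" "mb \<le> M2"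
    unfolding ma_def mb_def mc_def jab_def jac_def jbc_def
    using atoms bounded by (auto intro!: join_of_least)
  note facts = mem le this assms(7) le_imp_comparable ge_imp_comparable
  have "walk_homotopic ?G (a0 # ma # a # jab # b # suf) (a0 # ma # a # jac # c # jbc # b # suf)"
    using walk_homotopic_cone[of ?G "[a0, ma]" a "[jab]" b suf "[jac, c, jbc]" J] by (simp add: facts)
  also have "walk_homotopic ?G \<dots> (a0 # mc # c # jbc # b # suf)"
    using walk_homotopic_cone[of ?G "[]" a0 "[ma, a, jac]" c "jbc # b # suf" "[mc]" M1] by (simp add: facts)
  also have "walk_homotopic ?G \<dots> (a0 # mb # b # suf)"
    using walk_homotopic_cone[of ?G "[]" a0 "[mc, c, jbc]" b suf "[mb]" M2] by (simp add: facts)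
  finally show ?thesis
    by (simp add: ma_def mb_def jab_def)
qed

lemma walk_homotopic_base_walk_snoc:
  assumes "u \<in> F" "v \<in> F" "comparable u v"
  shows "walk_homotopic (enlarged F) (base_walk u @ [v]) (base_walk v)"
proof -
  let ?G = "enlarged F"
  define a b where "a = atom_below u" and "b = atom_below v"
  define c t where "c = bridge_atom a b" and "t = (if u \<le> v then v else u)"
  have A: "a \<in> relevant_atoms F" "b \<in> relevant_atoms F" "c \<in> relevant_atoms F" "a0 \<in> relevant_atoms F"
    using assms unfolding relevant_atoms_def c_def a_def b_def by blast+
  then have atoms: "is_atom a" "is_atom b" "is_atom a0"
    by (auto intro: relevant_atoms_are_atoms)
  then have bounded: "has_upper_bound {a0, a}" "has_upper_bound {a, b}"
    by (simp_all add: atom_pair_bounded)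
  have mem: "join_of {a0, a} \<in> ?G" "join_of {a, b} \<in> ?G" "a \<in> ?G" "b \<in> ?G" "a0 \<in> ?G"
    "u \<in> ?G" "v \<in> ?G" "t \<in> ?G"
    using A bounded assms subset_enlarged by (auto simp: t_def intro!: join_of_mem_enlarged)
  have le: "a0 \<le> join_of {a0, a}" "a \<le> join_of {a0, a}" "a \<le> join_of {a, b}" "b \<le> join_of {a, b}"
    using atoms bounded by (auto intro!: upper_join_of)
  have "a \<le> u" "b \<le> v"
    using atom_below by (simp_all add: a_def b_def)
  moreover have "u \<le> t" "v \<le> t"
    using assms(3) by (auto simp: t_def comparable_def)
  ultimately have below_t: "a \<le> u" "b \<le> v" "u \<le> t" "v \<le> t" "a \<le> t" "b \<le> t"
    by (blast intro: order_trans)+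
  then have "join_of {a, b} \<le> t"
    using atoms bounded by (auto intro!: join_of_least)
  note facts = mem le below_t this assms(3) le_imp_comparable ge_imp_comparable
  have "walk_homotopic ?G [a0, join_of {a0, a}, a, u, v] [a0, join_of {a0, a}, a, join_of {a, b}, b, v]"
    using walk_homotopic_cone[of ?G "[a0, join_of {a0, a}]" a "[u]" v "[]" "[join_of {a, b}, b]" t]
    by (simp add: facts)
  also have "walk_homotopic ?G \<dots> [a0, join_of {a0, b}, b, v]"
    using bridge_atom[OF atoms(1,2)] A facts by (intro walk_homotopic_bridge) (simp_all add: c_def)
  finally show ?thesis
    by (simp add: base_walk_def a_def b_def)
qed

end


section \<open>Paths through the open star of a vertex\<close>

lemma path_image_segment_vertex_subcomplex:
  assumes "f \<in> subcomplex G" "0 < f v"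
  shows "path_image (segment_path (vertex v) f) \<subseteq> subcomplex G"
proof -
  obtain D where D: "D \<in> simplices_in G" "f \<in> geom_simplex D" "v \<in> D"
    using assms by (rule subcomplex_open_starE)
  then show ?thesis
    using path_image_segment_path_subset[OF vertex_in_geom_simplex[OF simplices_in_finite[OF D(1)] D(3)] D(2)]
      geom_simplex_subset_subcomplex[OF D(1)] by blast
qed

lemma padded_star_common_simplex:
  assumes "path_image \<gamma> \<subseteq> subcomplex G" "\<forall>s\<in>{0..1}. 0 < \<gamma> s v" "t \<in> {0..1}"
  shows "\<exists>D \<in> simplices_in G.
           ((segment_path (vertex v) (pathstart \<gamma>) +++ \<gamma>) +++ (\<lambda>_. pathfinish \<gamma>)) t \<in> geom_simplex D \<and>
           ((\<lambda>_. vertex v) +++ segment_path (vertex v) (pathfinish \<gamma>)) t \<in> geom_simplex D"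
    (is "\<exists>D \<in> _. ?L t \<in> _ \<and> ?R t \<in> _")
proof -
  have star: "\<exists>D \<in> simplices_in G. \<gamma> s \<in> geom_simplex D \<and> vertex v \<in> geom_simplex D"
    if "s \<in> {0..1}" for s
  proof -
    have "\<gamma> s \<in> subcomplex G" "0 < \<gamma> s v"
      using assms(1,2) that by (auto simp: path_image_def)
    then obtain D where "D \<in> simplices_in G" "\<gamma> s \<in> geom_simplex D" "v \<in> D"
      by (rule subcomplex_open_starE)
    then show ?thesis
      by (auto intro: vertex_in_geom_simplex simplices_in_finite)
  qed
  obtain D0 where D0: "D0 \<in> simplices_in G" "pathstart \<gamma> \<in> geom_simplex D0" "vertex v \<in> geom_simplex D0"
    using star[of 0] by (auto simp: pathstart_def)
  obtain D1 where D1: "D1 \<in> simplices_in G" "pathfinish \<gamma> \<in> geom_simplex D1" "vertex v \<in> geom_simplex D1"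
    using star[of 1] by (auto simp: pathfinish_def)
  consider "t \<le> 1/4" | "1/4 < t" "t \<le> 1/2" | "1/2 < t" by linarith
  then show ?thesis
  proof cases
    case 1
    then have "?L t = segment_path (vertex v) (pathstart \<gamma>) (4 * t)" "?R t = vertex v"
      by (simp_all add: joinpaths_def)
    then show ?thesis
      using D0 assms(3) 1 by (intro bexI[OF _ D0(1)]) (auto intro: segment_path_in_geom_simplex)
  next
    case 2
    then have "?L t = \<gamma> (4 * t - 1)" "?R t = vertex v"
      by (simp_all add: joinpaths_def)
    then show ?thesis
      using star[of "4 * t - 1"] 2 by auto
  next
    case 3
    then have "?L t = pathfinish \<gamma>" "?R t = segment_path (vertex v) (pathfinish \<gamma>) (2 * t - 1)"
      by (simp_all add: joinpaths_def)
    then show ?thesis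
      using D1 assms(3) 3 by (intro bexI[OF _ D1(1)]) (auto intro: segment_path_in_geom_simplex)
  qed
qed

text \<open>Padding both sides with constant paths makes them share a simplex at every time: the
  open star of v lies in the simplices containing v, and the segments to v stay in the simplices
  of the end points.\<close>
lemma homotopic_segment_join_star_path:
  assumes "path \<gamma>" "path_image \<gamma> \<subseteq> subcomplex G" "\<forall>s\<in>{0..1}. 0 < \<gamma> s v"
  shows "homotopic_paths (subcomplex G)
           (segment_path (vertex v) (pathstart \<gamma>) +++ \<gamma>) (segment_path (vertex v) (pathfinish \<gamma>))"
proof -
  let ?S = "subcomplex G" and ?f = "pathstart \<gamma>" and ?g = "pathfinish \<gamma>"
  have "pathstart \<gamma> \<in> ?S" "pathfinish \<gamma> \<in> ?S" "0 < ?f v" "0 < ?g v"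
    using assms(2,3) by (auto simp: path_image_def pathstart_def pathfinish_def)
  then have seg: "path_image (segment_path (vertex v) ?f) \<subseteq> ?S" "path_image (segment_path (vertex v) ?g) \<subseteq> ?S"
    by (simp_all add: path_image_segment_vertex_subcomplex)
  let ?L = "(segment_path (vertex v) ?f +++ \<gamma>) +++ (\<lambda>_. ?g)"
  let ?R = "(\<lambda>_. vertex v) +++ segment_path (vertex v) ?g"
  have "path (segment_path (vertex v) ?f +++ \<gamma>)" "path_image (segment_path (vertex v) ?f +++ \<gamma>) \<subseteq> ?S"
    using seg assms(1,2) by (simp_all add: subset_path_image_join)
  from homotopic_paths_sym[OF homotopic_paths_rid_const[OF this]]
  have "homotopic_paths ?S (segment_path (vertex v) ?f +++ \<gamma>) ?L"
    by simp
  also have "homotopic_paths ?S ?L ?R"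
    using padded_star_common_simplex[OF assms(2,3)]
    by (intro homotopic_paths_common_simplices) (use assms in \<open>auto simp: pathstart_join pathfinish_join\<close>)
  also have "homotopic_paths ?S ?R (segment_path (vertex v) ?g)"
    using homotopic_paths_lid_const[OF path_segment_path seg(2)] by simp
  finally show ?thesis .
qed

definition support_vertex :: "('a \<Rightarrow> real) \<Rightarrow> 'a"
  where "support_vertex f = (SOME x. 0 < f x)"

lemma support_vertex:
  assumes "f \<in> geom_simplex D"
  shows "0 < f (support_vertex f)" "support_vertex f \<in> D"
proof -
  obtain x where "0 < f x" using geom_simplex_ex_pos[OF assms] by blast
  then show "0 < f (support_vertex f)"
    unfolding support_vertex_def by (rule someI)
  then show "support_vertex f \<in> D"
    by (rule geom_simplex_pos_imp_mem[OF assms])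
qed

lemma subinterval_subset_ball:
  assumes "k < N" "1 / real N < e"
  shows "{real k / N .. real (Suc k) / N} \<subseteq> ball (real k / N) e \<inter> {0..1}"
proof
  fix s assume s: "s \<in> {real k / N .. real (Suc k) / N}"
  let ?x = "real k / N" and ?h = "1 / real N"
  have bounds: "0 \<le> ?x" "?x + ?h \<le> 1" "real (Suc k) / N = ?x + ?h"
    using assms(1) by (simp_all add: divide_simps)
  with s have lo: "?x \<le> s" and hi: "s \<le> ?x + ?h"
    by simp_all
  have "s \<in> {0..1}"
    unfolding atLeastAtMost_iff using lo hi bounds(1,2) by linarith
  moreover have "dist s ?x < e"
    unfolding dist_real_def abs_less_iff using lo hi assms(2) by linarith
  ultimately show "s \<in> ball ?x e \<inter> {0..1}"
    by (simp add: dist_commute)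
qed

lemma path_pieces_in_open_stars:
  fixes p :: "real \<Rightarrow> 'a \<Rightarrow> real"
  assumes "path p" "\<forall>s\<in>{0..1}. \<exists>v. 0 < p s v"
  obtains N :: nat where "0 < N" "\<forall>k<N. \<exists>v. \<forall>s\<in>{real k / N .. real (Suc k) / N}. 0 < p s v"
proof -
  define q where "q s = p (max 0 (min 1 s))" for s
  have q: "q s = p s" if "s \<in> {0..1}" for s
    using that by (simp add: q_def)
  have "continuous_on UNIV (\<lambda>s. max 0 (min 1 s) :: real)"
    by (intro continuous_intros)
  then have "continuous_on UNIV q"
    unfolding q_def by (rule continuous_on_compose2[OF assms(1)[unfolded path_def]]) auto
  then have "continuous_on UNIV (\<lambda>s. q s v)" for v
    by (rule continuous_on_product_then_coordinatewise)
  then have opn: "open {s. 0 < q s v}" for v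
    by (rule open_Collect_less[OF continuous_on_const])
  have cover: "{0..1} \<subseteq> (\<Union>v. {s. 0 < q s v})"
  proof
    fix s :: real assume "s \<in> {0..1}"
    with assms(2) q show "s \<in> (\<Union>v. {s. 0 < q s v})" by auto
  qed
  obtain e where e: "0 < e" "\<And>x. x \<in> {0..1} \<Longrightarrow> \<exists>U \<in> range (\<lambda>v. {s. 0 < q s v}). ball x e \<subseteq> U"
    using Heine_Borel_lemma[OF compact_Icc cover] opn by blast
  obtain n where "inverse (real (Suc n)) < e"
    using reals_Archimedean[OF e(1)] by blast
  then have N: "0 < Suc n" "1 / real (Suc n) < e"
    by (simp_all add: divide_inverse)
  have "\<exists>v. \<forall>s\<in>{real k / Suc n .. real (Suc k) / Suc n}. 0 < p s v" if "k < Suc n" for k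
  proof -
    have "real k / Suc n \<in> {0..1}" using that by auto
    then obtain v where v: "ball (real k / Suc n) e \<subseteq> {s. 0 < q s v}"
      using e(2) by blast
    have "0 < p s v" if "s \<in> {real k / Suc n .. real (Suc k) / Suc n}" for s
    proof -
      have "s \<in> ball (real k / Suc n) e \<inter> {0..1}"
        using subinterval_subset_ball[OF \<open>k < Suc n\<close> N(2)] that ..
      then have "0 < q s v" "s \<in> {0..1}"
        using v by blast+
      with q show ?thesis by simp
    qed
    then show ?thesis by blast
  qed
  with N(1) show thesis
    using that by blast
qed

section \<open>Tethers and null-homotopy of loops\<close>

context bridged_atomized_poset
begin

definition tether_via :: "'a \<Rightarrow> ('a \<Rightarrow> real) \<Rightarrow> real \<Rightarrow> 'a \<Rightarrow> real"
  where "tether_via v f = edge_path (base_walk v) +++ segment_path (vertex v) f"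

definition tether :: "('a \<Rightarrow> real) \<Rightarrow> real \<Rightarrow> 'a \<Rightarrow> real"
  where "tether f = tether_via (support_vertex f) f"

lemma edge_path_base_walk:
  assumes "w \<in> F"
  shows "path (edge_path (base_walk w))" "path_image (edge_path (base_walk w)) \<subseteq> subcomplex (enlarged F)"
    "pathstart (edge_path (base_walk w)) = vertex a0" "pathfinish (edge_path (base_walk w)) = vertex w"
  using edge_path_walk_in[OF walk_in_base_walk[OF assms]]
  by (simp_all add: pathstart_edge_path pathfinish_edge_path base_walk_def)

lemma tether_via:
  assumes "D \<in> simplices_in F" "f \<in> geom_simplex D" "v \<in> D"
  shows "path (tether_via v f)" "path_image (tether_via v f) \<subseteq> subcomplex (enlarged F)"
    "pathstart (tether_via v f) = vertex a0" "pathfinish (tether_via v f) = f"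
proof -
  have "v \<in> F" using assms(1,3) by (auto simp: simplices_in_def)
  note base = edge_path_base_walk[OF this]
  have "D \<in> simplices_in (enlarged F)"
    using assms(1) subset_enlarged(1) by (rule simplices_in_mono)
  moreover have "path_image (segment_path (vertex v) f) \<subseteq> geom_simplex D"
    using vertex_in_geom_simplex[OF simplices_in_finite[OF assms(1)] assms(3)] assms(2)
    by (rule path_image_segment_path_subset)
  ultimately have "path_image (segment_path (vertex v) f) \<subseteq> subcomplex (enlarged F)"
    using geom_simplex_subset_subcomplex by blast
  then show "path (tether_via v f)" "path_image (tether_via v f) \<subseteq> subcomplex (enlarged F)"
    "pathstart (tether_via v f) = vertex a0" "pathfinish (tether_via v f) = f"
    using base by (simp_all add: tether_via_def subset_path_image_join)
qed

lemma tether: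
  assumes "f \<in> subcomplex F"
  shows "path (tether f)" "path_image (tether f) \<subseteq> subcomplex (enlarged F)"
    "pathstart (tether f) = vertex a0" "pathfinish (tether f) = f"
proof -
  obtain D where D: "D \<in> simplices_in F" "f \<in> geom_simplex D"
    using assms by (rule subcomplexE)
  then show "path (tether f)" "path_image (tether f) \<subseteq> subcomplex (enlarged F)"
    "pathstart (tether f) = vertex a0" "pathfinish (tether f) = f"
    using tether_via[OF D support_vertex(2)[OF D(2)]] by (simp_all add: tether_def)
qed

lemma homotopic_base_walk_edge:
  assumes "w \<in> F" "v \<in> F" "comparable w v"
  shows "homotopic_paths (subcomplex (enlarged F)) (edge_path (base_walk w) +++ edge w v)
           (edge_path (base_walk v))"
proof -
  have "homotopic_paths (subcomplex (enlarged F)) (edge_path (base_walk w) +++ edge w v)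
          (edge_path (base_walk w @ [v]))"
    using edge_path_snoc[of "enlarged F" "base_walk w" v] walk_in_base_walk[OF assms(1)]
      assms subset_enlarged
    by (auto simp: base_walk_def)
  then show ?thesis
    using walk_homotopic_base_walk_snoc[OF assms] unfolding walk_homotopic_def
    by (rule homotopic_paths_trans)
qed

lemma homotopic_tether_via:
  assumes "D \<in> simplices_in F" "f \<in> geom_simplex D" "v \<in> D" "w \<in> D"
  shows "homotopic_paths (subcomplex (enlarged F)) (tether_via w f) (tether_via v f)"
proof -
  let ?S = "subcomplex (enlarged F)" and ?Vw = "edge_path (base_walk w)" and ?Vv = "edge_path (base_walk v)"
  have D: "D \<in> simplices_in (enlarged F)" "finite D"
    using assms(1) subset_enlarged(1) by (auto intro: simplices_in_mono simplices_in_finite)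
  have "v \<in> F" "w \<in> F" using assms(1,3,4) by (auto simp: simplices_in_def)
  note Vw = edge_path_base_walk[OF \<open>w \<in> F\<close>] and Vv = edge_path_base_walk[OF \<open>v \<in> F\<close>]
  have vertices: "vertex v \<in> geom_simplex D" "vertex w \<in> geom_simplex D"
    using D(2) assms(3,4) by (simp_all add: vertex_in_geom_simplex)
  have in_D: "path_image (segment_path (vertex w) f) \<subseteq> geom_simplex D"
    "path_image (segment_path (vertex v) f) \<subseteq> geom_simplex D" "path_image (edge w v) \<subseteq> geom_simplex D"
    using vertices assms(2-4) D(2) by (simp_all add: path_image_segment_path_subset path_image_edge_subset)
  then have in_S: "path_image (segment_path (vertex v) f) \<subseteq> ?S" "path_image (edge w v) \<subseteq> ?S"
    using geom_simplex_subset_subcomplex[OF D(1)] by blast+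
  have "homotopic_paths ?S (segment_path (vertex w) f) (edge w v +++ segment_path (vertex v) f)"
    using in_D by (intro homotopic_paths_in_simplex[OF _ _ _ _ D(1)] subset_path_image_join) auto
  then have "homotopic_paths ?S (tether_via w f) (?Vw +++ (edge w v +++ segment_path (vertex v) f))"
    unfolding tether_via_def using Vw by (intro homotopic_paths_join) auto
  also have "homotopic_paths ?S \<dots> ((?Vw +++ edge w v) +++ segment_path (vertex v) f)"
    using Vw in_S by (intro homotopic_paths_assoc) auto
  also have "homotopic_paths ?S \<dots> (tether_via v f)"
    unfolding tether_via_def using Vv in_S simplices_in_comparable[OF assms(1,4,3)]
    by (intro homotopic_paths_join homotopic_base_walk_edge)
       (auto simp: comparable_def \<open>v \<in> F\<close> \<open>w \<in> F\<close>)
  finally show ?thesis .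
qed

lemma tether_join_star_path:
  assumes "path \<gamma>" "path_image \<gamma> \<subseteq> subcomplex F" "\<forall>s\<in>{0..1}. 0 < \<gamma> s v"
  shows "homotopic_paths (subcomplex (enlarged F)) (tether (pathstart \<gamma>) +++ \<gamma>) (tether (pathfinish \<gamma>))"
proof -
  let ?S = "subcomplex (enlarged F)" and ?V = "edge_path (base_walk v)"
    and ?f = "pathstart \<gamma>" and ?g = "pathfinish \<gamma>"
  have carrier: "\<exists>D \<in> simplices_in F. \<gamma> s \<in> geom_simplex D \<and> v \<in> D \<and> support_vertex (\<gamma> s) \<in> D"
    if "s \<in> {0..1}" for s
  proof -
    have "\<gamma> s \<in> subcomplex F" "0 < \<gamma> s v"
      using assms(2,3) that by (auto simp: path_image_def)
    then obtain D where "D \<in> simplices_in F" "\<gamma> s \<in> geom_simplex D" "v \<in> D"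
      by (rule subcomplex_open_starE)
    then show ?thesis
      using support_vertex(2) by blast
  qed
  obtain Df where Df: "Df \<in> simplices_in F" "?f \<in> geom_simplex Df" "v \<in> Df" "support_vertex ?f \<in> Df"
    using carrier[of 0] by (auto simp: pathstart_def)
  obtain Dg where Dg: "Dg \<in> simplices_in F" "?g \<in> geom_simplex Dg" "v \<in> Dg" "support_vertex ?g \<in> Dg"
    using carrier[of 1] by (auto simp: pathfinish_def)
  have "v \<in> F" using Df by (auto simp: simplices_in_def)
  note V = edge_path_base_walk[OF this]
  note tf = tether_via[OF Df(1-3)] and tg = tether_via[OF Dg(1-3)]
  have seg: "path_image (segment_path (vertex v) ?f) \<subseteq> ?S"
    using tf(2) by (simp add: tether_via_def path_image_join V)
  have star: "homotopic_paths ?S (segment_path (vertex v) ?f +++ \<gamma>) (segment_path (vertex v) ?g)"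
    using homotopic_segment_join_star_path[OF assms] subcomplex_mono[OF subset_enlarged(1)]
    by (rule homotopic_paths_subset)
  have \<gamma>S: "path_image \<gamma> \<subseteq> ?S"
    using assms(2) subcomplex_mono[OF subset_enlarged(1)] by blast
  have "homotopic_paths ?S (tether ?f +++ \<gamma>) (tether_via v ?f +++ \<gamma>)"
    unfolding tether_def using homotopic_tether_via[OF Df(1,2,3,4)] assms(1) \<gamma>S tf
      tether_via(4)[OF Df(1,2,4)]
    by (intro homotopic_paths_join) auto
  also have "homotopic_paths ?S \<dots> (?V +++ (segment_path (vertex v) ?f +++ \<gamma>))"
    unfolding tether_via_def using V seg assms(1) \<gamma>S
    by (intro homotopic_paths_sym[OF homotopic_paths_assoc]) auto
  also have "homotopic_paths ?S \<dots> (tether_via v ?g)"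
    unfolding tether_via_def using V star by (intro homotopic_paths_join) auto
  also have "homotopic_paths ?S \<dots> (tether ?g)"
    unfolding tether_def using homotopic_tether_via[OF Dg(1,2,4,3)] .
  finally show ?thesis .
qed

lemma tether_join_tsubpath_step:
  assumes "path p" "path_image p \<subseteq> subcomplex F" "0 \<le> u" "u \<le> w" "w \<le> 1" "0 < w"
    and "\<forall>s\<in>{u..w}. 0 < p s v"
    and "homotopic_paths (subcomplex (enlarged F)) (tether (p 0) +++ tsubpath 0 u p) (tether (p u))"
  shows "homotopic_paths (subcomplex (enlarged F)) (tether (p 0) +++ tsubpath 0 w p) (tether (p w))"
proof -
  let ?S = "subcomplex (enlarged F)"
  have S: "subcomplex F \<subseteq> ?S"
    by (rule subcomplex_mono[OF subset_enlarged(1)])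
  have p0: "p 0 \<in> subcomplex F"
    using assms(2) by (auto simp: path_image_def)
  note \<sigma> = tether[OF p0]
  have unit: "(0::real) \<in> {0..1}" "u \<in> {0..1}" "w \<in> {0..1}"
    using assms(3-5) by auto
  have A: "path (tsubpath 0 u p)" "path_image (tsubpath 0 u p) \<subseteq> ?S"
    using path_tsubpath[OF assms(1) unit(1,2)] path_image_tsubpath_subset[OF unit(1,2), of p]
      assms(2) S by auto
  have B: "path (tsubpath u w p)" "path_image (tsubpath u w p) \<subseteq> subcomplex F"
    using path_tsubpath[OF assms(1) unit(2,3)] path_image_tsubpath_subset[OF unit(2,3), of p]
      assms(2) by auto
  have "\<forall>s\<in>{0..1}. 0 < tsubpath u w p s v"
    using tsubpath_in_interval[OF assms(4), of _ p] assms(7) by fastforce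
  note piece = tether_join_star_path[OF B this]
  have "homotopic_paths ?S (tsubpath 0 w p) (tsubpath 0 u p +++ tsubpath u w p)"
    by (rule homotopic_paths_sym[OF homotopic_join_tsubpaths]) (use assms(1-6) S in auto)
  then have "homotopic_paths ?S (tether (p 0) +++ tsubpath 0 w p)
          (tether (p 0) +++ (tsubpath 0 u p +++ tsubpath u w p))"
    using \<sigma> by (intro homotopic_paths_join) auto
  also have "homotopic_paths ?S \<dots> ((tether (p 0) +++ tsubpath 0 u p) +++ tsubpath u w p)"
    using \<sigma> A B S by (intro homotopic_paths_assoc) auto
  also have "homotopic_paths ?S \<dots> (tether (p u) +++ tsubpath u w p)"
    using assms(8) B S by (intro homotopic_paths_join) auto
  also have "homotopic_paths ?S \<dots> (tether (p w))"
    using piece by simp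
  finally show ?thesis .
qed

lemma tether_join_initial_segment:
  assumes "path p" "path_image p \<subseteq> subcomplex F"
    and pieces: "\<forall>k<N. \<exists>v. \<forall>s\<in>{real k / N .. real (Suc k) / N}. 0 < p s v"
  shows "k \<le> N \<Longrightarrow> homotopic_paths (subcomplex (enlarged F))
           (tether (p 0) +++ tsubpath 0 (real k / N) p) (tether (p (real k / N)))"
proof (induction k)
  case 0
  have p0: "p 0 \<in> subcomplex F"
    using assms(2) by (auto simp: path_image_def)
  have "tsubpath 0 0 p = (\<lambda>_. pathfinish (tether (p 0)))"
    using tether(4)[OF p0] by (simp add: tsubpath_def fun_eq_iff)
  then show ?case
    using homotopic_paths_rid_const[OF tether(1,2)[OF p0]] by simp
next
  case (Suc k)
  then have "k < N" "k \<le> N" by simp_all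
  then obtain v where v: "\<forall>s\<in>{real k / N .. real (Suc k) / N}. 0 < p s v"
    using pieces by blast
  have bounds: "0 \<le> real k / N" "real k / N \<le> real (Suc k) / N" "real (Suc k) / N \<le> 1"
    "0 < real (Suc k) / N"
    using \<open>k < N\<close> by (auto simp: divide_simps)
  show ?case
    by (rule tether_join_tsubpath_step[OF assms(1,2) bounds v Suc.IH[OF \<open>k \<le> N\<close>]])
qed

lemma loop_nullhomotopic:
  assumes "path p" "path_image p \<subseteq> subcomplex F" "p 1 = p 0"
  shows "homotopic_paths (subcomplex (enlarged F)) p (\<lambda>_. p 0)"
proof -
  have "\<exists>v. 0 < p s v" if "s \<in> {0..1}" for s
  proof -
    have "p s \<in> subcomplex F"
      using assms(2) that by (auto simp: path_image_def)
    then obtain D where "p s \<in> geom_simplex D"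
      by (rule subcomplexE)
    then obtain x where "0 < p s x"
      by (rule geom_simplex_ex_pos)
    then show ?thesis ..
  qed
  then obtain N :: nat where N: "0 < N" "\<forall>k<N. \<exists>v. \<forall>s\<in>{real k / N .. real (Suc k) / N}. 0 < p s v"
    using path_pieces_in_open_stars[OF assms(1)] by blast
  have p0: "p 0 \<in> subcomplex F"
    using assms(2) by (auto simp: path_image_def)
  have pS: "path_image p \<subseteq> subcomplex (enlarged F)"
    using assms(2) subcomplex_mono[OF subset_enlarged(1)] by blast
  have "homotopic_paths (subcomplex (enlarged F)) (tether (p 0) +++ p) (tether (p 0))"
    using tether_join_initial_segment[OF assms(1,2) N(2), of N] N(1) assms(3)
    by (simp add: tsubpath_def)
  moreover have "pathfinish (tether (p 0)) = pathstart p"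
    using tether(4)[OF p0] by (simp add: pathstart_def)
  ultimately have "homotopic_paths (subcomplex (enlarged F)) p (\<lambda>_. pathstart p)"
    by (rule homotopic_paths_left_cancel_const[OF tether(1,2)[OF p0] assms(1) pS, rotated])
  then show ?thesis
    by (simp add: pathstart_def)
qed

lemma loop_homotopic_base_vertex:
  assumes "pathin realization p" "p 1 = p 0"
  shows "homotopic_with (\<lambda>r. r 1 = r 0) (top_of_set {0..1}) realization p (\<lambda>_. vertex a0)"
proof -
  define F where "F = {x. \<exists>f \<in> p ` {0..1}. 0 < f x}"
  have "compactin realization (p ` {0..1})"
    by (rule image_compactin[OF _ assms(1)[unfolded pathin_def]]) (simp add: compactin_subtopology)
  then have "finite F"
    unfolding F_def by (rule finite_support_if_compactin_realization)
  have "p s \<in> subcomplex F" if "s \<in> {0..1}" for s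
  proof (rule subcomplex_if_support_subset)
    show "p s \<in> realization_carrier"
      using continuous_map_image_subset_topspace[OF assms(1)[unfolded pathin_def]] that
      by (auto simp: topspace_realization)
    show "{x. 0 < p s x} \<subseteq> F"
      using that by (auto simp: F_def)
  qed
  then have image: "path_image p \<subseteq> subcomplex F"
    by (auto simp: path_image_def)
  have p0: "p 0 \<in> subcomplex F"
    using image by (auto simp: path_image_def)
  have "homotopic_paths (subcomplex (enlarged F)) p (\<lambda>_. p 0)"
    using path_if_pathin_realization[OF assms(1)] image assms(2) by (rule loop_nullhomotopic)
  then have "homotopic_loops (subcomplex (enlarged F)) p (\<lambda>_. p 0)"
    by (rule homotopic_paths_imp_homotopic_loops) (use assms(2) in \<open>simp_all add: pathstart_def pathfinish_def\<close>)
  moreover have "homotopic_loops (subcomplex (enlarged F)) (\<lambda>_. p 0) (\<lambda>_. vertex a0)"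
    using homotopic_loops_const_along_path[of "reversepath (tether (p 0))" "subcomplex (enlarged F)"]
      tether[OF p0] by simp
  ultimately have "homotopic_loops (subcomplex (enlarged F)) p (\<lambda>_. vertex a0)"
    by (rule homotopic_loops_trans)
  then show ?thesis
    using finite_enlarged[OF \<open>finite F\<close>] by (rule homotopic_loops_imp_homotopic_in_realization)
qed

end

theorem mainTheorem3:
  assumes "atomized TYPE('a::order)"
    and "\<forall>a1 a2::'a. is_atom a1 \<and> is_atom a2 \<longrightarrow> \<not> generates {a1, a2}"
    and "is_atom (a0::'a)"
    and "\<forall>a1 a2::'a. is_atom a1 \<and> is_atom a2 \<longrightarrow>
           (\<exists>a3. is_atom a3 \<and> has_upper_bound {a1, a2, a3} \<and>
                 has_upper_bound {a0, a1, a3} \<and> has_upper_bound {a0, a2, a3})"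
  shows "simply_connected_space (order_complex_realization TYPE('a))"
proof -
  interpret bridged_atomized_poset a0
    using assms by unfold_locales
  show ?thesis
    unfolding simply_connected_space_def
  proof (intro allI impI)
    fix p q :: "real \<Rightarrow> 'a \<Rightarrow> real"
    assume loops: "pathin realization p \<and> p 1 = p 0 \<and> pathin realization q \<and> q 1 = q 0"
    have "homotopic_with (\<lambda>r. r 1 = r 0) (top_of_set {0..1}) realization p (\<lambda>_. vertex a0)"
      using loops by (simp add: loop_homotopic_base_vertex)
    moreover have "homotopic_with (\<lambda>r. r 1 = r 0) (top_of_set {0..1}) realization q (\<lambda>_. vertex a0)"
      using loops by (simp add: loop_homotopic_base_vertex)
    ultimately show "homotopic_with (\<lambda>r. r 1 = r 0) (top_of_set {0..1}) realization p q"
      by (rule homotopic_with_trans[OF _ homotopic_with_symD])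
  qed
qed

end
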